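(* Let $k\geq1$, $n\geq2k$, let $\mathcal{S},\mathcal{T}$ be antichains in $\mathcal{F}=\mathcal{F}_{2k}^{[1,n]}$ with $\mathcal{T}\prec_p\mathcal{S}$, and let $i\geq1$. Then $$B(\mathcal{S},i)\setminus B(\mathcal{T},i)=\bigcup_{j\geq i}\Big(\big(B(\mathcal{S}([j,j+1]),j+2)\setminus B(\mathcal{T}([j,j+1]),j+2)\big)*\overline{[j,j+1]}\Big).$$
   Context: Notation: $[m,n]=\{m,\dots,n\}$; $d$-subsets of $[n]$ are identified with increasing vectors; $G\leq_p F$ means componentwise $\leq$ and $G\prec_p F$ means $G\leq_p F-\mathbf{1}_d$ ($\mathbf{1}_d$ the all-ones vector). For $r\geq1$, $\mathcal{F}_{2r}^{[m,n]}$ is the set of sets $\{i_1,i_1+1,\dots,i_r,i_r+1\}$ with $m\leq i_1$, $i_r\leq n-1$, $i_j\leq i_{j+1}-2$, ordered by $\leq_p$; $\mathcal{F}_0^{[m,n]}=\{\emptyset\}$. For antichains, $\mathcal{T}\prec_p\mathcal{S}$ means every $G\in\mathcal{T}$ satisfies $G\prec_p F$ for some $F\in\mathcal{S}$. $\mathcal{F}_{2r}(\mathcal{S})$ is the order ideal generated by $\mathcal{S}$. For $1\leq\ell\leq k$ and $J=[j,j+2\ell-1]$, $\mathcal{S}(J)\subseteq\mathcal{F}_{2(k-\ell)}^{[1,n]}$ is the set of maximal elements of $\{H\in\mathcal{F}_{2(k-\ell)}^{[1,n]}: H\subseteq[j+2\ell,n],\ J\cup H\in\mathcal{F}(\mathcal{S})\}$.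 $B(\mathcal{S},m)$ is the pure complex whose facets are the sets of $\mathcal{F}(\mathcal{S})\cap\mathcal{F}_{2k}^{[m,n]}$; $B(\mathcal{S}(J),m)$ is the pure complex whose facets are the sets of $\mathcal{F}_{2(k-\ell)}(\mathcal{S}(J))\cap\mathcal{F}_{2(k-\ell)}^{[m,n]}$. For pure complexes $X,Y$, $X\setminus Y$ is the complex generated by the facets of $X$ that are not facets of $Y$. $\overline{V}$ is the full simplex on $V$, $*$ is the join (join with the void complex is void). *)

theory Defs
  imports Main
begin

text \<open>d-subsets of [n] are identified with increasing vectors: the t-th entry
  (0-based) of a finite set G of naturals is sorted_list_of_set G ! t.\<close>

definition leq_p :: "nat set \<Rightarrow> nat set \<Rightarrow> bool" where
  "leq_p G F \<longleftrightarrow> card G = card F \<and>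
     (\<forall>t < card F. sorted_list_of_set G ! t \<le> sorted_list_of_set F ! t)"

definition prec_p :: "nat set \<Rightarrow> nat set \<Rightarrow> bool" where
  "prec_p G F \<longleftrightarrow> card G = card F \<and>
     (\<forall>t < card F. sorted_list_of_set G ! t + 1 \<le> sorted_list_of_set F ! t)"

text \<open>F_{2r}^{[m,n]}: unions of r dominoes {i,i+1} with m \<le> i, i+1 \<le> n,
  consecutive starting points at distance at least 2. For r = 0 this is {{}}.\<close>
definition fam :: "nat \<Rightarrow> nat \<Rightarrow> nat \<Rightarrow> nat set set" where
  "fam r m n = {(\<Union>i\<in>I. {i, i+1}) | I. finite I \<and> card I = r \<and>
      (\<forall>i\<in>I. m \<le> i \<and> i + 1 \<le> n) \<and> (\<forall>i\<in>I. \<forall>i'\<in>I. i < i' \<longrightarrow> i + 2 \<le> i')}"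

definition antichain_p :: "nat \<Rightarrow> nat \<Rightarrow> nat set set \<Rightarrow> bool" where
  "antichain_p n k S \<longleftrightarrow> S \<subseteq> fam k 1 n \<and>
     (\<forall>F\<in>S. \<forall>G\<in>S. leq_p F G \<longrightarrow> F = G)"

definition prec_fam :: "nat set set \<Rightarrow> nat set set \<Rightarrow> bool" where
  "prec_fam T S \<longleftrightarrow> (\<forall>G\<in>T. \<exists>F\<in>S. prec_p G F)"

definition ideal_p :: "nat \<Rightarrow> nat \<Rightarrow> nat set set \<Rightarrow> nat set set" where
  "ideal_p n r S = {G \<in> fam r 1 n. \<exists>F\<in>S. leq_p G F}"

text \<open>S(J) for J = [j, j+2l-1]: maximal elements (w.r.t. \<le>_p) of
  {H \<in> F_{2(k-l)}^{[1,n]}. H \<subseteq> [j+2l, n], J \<union> H \<in> F(S)}.\<close>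
definition link_fam :: "nat \<Rightarrow> nat \<Rightarrow> nat \<Rightarrow> nat set set \<Rightarrow> nat \<Rightarrow> nat set set" where
  "link_fam n k l S j =
     (let P = {H \<in> fam (k - l) 1 n. H \<subseteq> {j + 2*l..n} \<and> {j..j + 2*l - 1} \<union> H \<in> ideal_p n k S}
      in {H \<in> P. \<forall>H'\<in>P. leq_p H H' \<longrightarrow> H' = H})"

text \<open>Simplicial complexes are represented by their set of faces (the void
  complex is the empty set of faces; the complex {{}} is not void).\<close>

definition gen :: "nat set set \<Rightarrow> nat set set" where
  "gen \<Phi> = {\<sigma>. \<exists>F\<in>\<Phi>. \<sigma> \<subseteq> F}"

definition facets :: "nat set set \<Rightarrow> nat set set" where
  "facets X = {F \<in> X. \<forall>G\<in>X. F \<subseteq> G \<longrightarrow> G = F}"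

definition cdiff :: "nat set set \<Rightarrow> nat set set \<Rightarrow> nat set set" where
  "cdiff X Y = gen (facets X - facets Y)"

definition join :: "nat set set \<Rightarrow> nat set set \<Rightarrow> nat set set" where
  "join X Y = {\<sigma> \<union> \<tau> | \<sigma> \<tau>. \<sigma> \<in> X \<and> \<tau> \<in> Y}"

definition Bcx :: "nat \<Rightarrow> nat \<Rightarrow> nat set set \<Rightarrow> nat \<Rightarrow> nat set set" where
  "Bcx n r S m = gen (ideal_p n r S \<inter> fam r m n)"

end

theory Submission
  imports Defs
begin

text \<open>Every facet of B(S,i) is F = [j,j+1] \<union> H for a unique first domino [j,j+1] with j \<ge> i and
  H \<in> F_{2(k-1)}^{[j+2,n]}. Prepending a fixed domino to sets lying to its right preserves \<le>_p,
  so F \<in> F(S) exactly when H lies in the order ideal generated by the maximal such H, i.e. in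
  F_{2(k-1)}(S([j,j+1])). Hence the facets of B(S,i) not in B(T,i) are exactly the sets
  [j,j+1] \<union> H with H a facet of B(S([j,j+1]),j+2) but not of B(T([j,j+1]),j+2); and since all
  facets have the same cardinality, a pure complex is determined by its facets.\<close>

lemma fam_subset: "F \<in> fam r m n \<Longrightarrow> F \<subseteq> {m..n}"
  unfolding fam_def by auto

lemma fam_finite_card:
  assumes "F \<in> fam r m n"
  shows "finite F" "card F = 2 * r"
proof -
  obtain I where F: "F = (\<Union>i\<in>I. {i, i+1})" and I: "finite I" "card I = r"
    and sep: "\<forall>i\<in>I. \<forall>i'\<in>I. i < i' \<longrightarrow> i + 2 \<le> i'"
    using assms unfolding fam_def by blast
  have disjoint: "{i, i + 1} \<inter> {i', i' + 1} = {}" if "i \<in> I" "i' \<in> I" "i \<noteq> i'" for i i'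
  proof -
    have "i + 2 \<le> i' \<or> i' + 2 \<le> i" using sep that by (metis linorder_neqE_nat)
    then show ?thesis by auto
  qed
  have "card F = (\<Sum>i\<in>I. card {i, i+1})"
    unfolding F using I(1) disjoint by (intro card_UN_disjoint) auto
  then show "card F = 2 * r" using I by simp
  show "finite F" using F I by simp
qed

lemma finite_fam: "finite (fam r m n)"
proof (rule finite_subset)
  show "fam r m n \<subseteq> Pow {m..n}" using fam_subset by blast
qed simp

lemma fam_antimono: "m' \<le> m \<Longrightarrow> fam r m n \<subseteq> fam r m' n"
  unfolding fam_def by fastforce

lemma insert_domino_fam:
  assumes "m \<le> j" "j + 1 \<le> n" "H \<in> fam r (j + 2) n"
  shows "{j, j + 1} \<union> H \<in> fam (Suc r) m n"
proof -
  obtain I where H: "H = (\<Union>i\<in>I. {i, i+1})" and I: "finite I" "card I = r"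
    and rng: "\<forall>i\<in>I. j + 2 \<le> i \<and> i + 1 \<le> n"
    and sep: "\<forall>i\<in>I. \<forall>i'\<in>I. i < i' \<longrightarrow> i + 2 \<le> i'"
    using assms(3) unfolding fam_def by blast
  have "j \<notin> I" using rng by force
  then have "finite (insert j I) \<and> card (insert j I) = Suc r \<and>
      (\<forall>i\<in>insert j I. m \<le> i \<and> i + 1 \<le> n) \<and>
      (\<forall>i\<in>insert j I. \<forall>i'\<in>insert j I. i < i' \<longrightarrow> i + 2 \<le> i')"
    using I rng sep assms(1,2) by fastforce
  moreover have "{j, j + 1} \<union> H = (\<Union>i\<in>insert j I. {i, i+1})" using H by auto
  ultimately show ?thesis unfolding fam_def by blast
qed

lemma fam_split_first_domino:
  assumes "0 < r" "F \<in> fam r m n"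
  obtains j H where "m \<le> j" "j + 1 \<le> n" "H \<in> fam (r - 1) (j + 2) n" "F = {j, j + 1} \<union> H"
proof -
  obtain I where F: "F = (\<Union>i\<in>I. {i, i+1})" and I: "finite I" "card I = r"
    and rng: "\<forall>i\<in>I. m \<le> i \<and> i + 1 \<le> n"
    and sep: "\<forall>i\<in>I. \<forall>i'\<in>I. i < i' \<longrightarrow> i + 2 \<le> i'"
    using assms(2) unfolding fam_def by blast
  define j where "j = Min I"
  have j: "j \<in> I" using I assms(1) j_def by (metis Min_in card_gt_0_iff)
  have right: "j + 2 \<le> i" if "i \<in> I - {j}" for i
    using that sep j I(1) unfolding j_def by (metis DiffE Min_le insertCI le_neq_implies_less)
  define H where "H = (\<Union>i\<in>I - {j}. {i, i+1})"
  have "finite (I - {j}) \<and> card (I - {j}) = r - 1 \<and>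
      (\<forall>i\<in>I - {j}. j + 2 \<le> i \<and> i + 1 \<le> n) \<and>
      (\<forall>i\<in>I - {j}. \<forall>i'\<in>I - {j}. i < i' \<longrightarrow> i + 2 \<le> i')"
    using I j right rng sep by auto
  then have "H \<in> fam (r - 1) (j + 2) n"
    unfolding fam_def H_def by blast
  moreover have "F = {j, j + 1} \<union> H" unfolding F H_def using j by blast
  ultimately show ?thesis using that rng j by blast
qed

lemma sorted_list_of_set_domino_union:
  fixes H :: "nat set"
  assumes "finite H" "H \<subseteq> {j + 2..}"
  shows "sorted_list_of_set ({j, j + 1} \<union> H) = j # (j + 1) # sorted_list_of_set H"
proof (rule sorted_list_of_set_unique[THEN iffD1])
  show "finite ({j, j + 1} \<union> H)" using assms(1) by simp
  have "j \<notin> H" "j + 1 \<notin> H" using assms(2) by auto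
  then show "sorted_wrt (<) (j # (j + 1) # sorted_list_of_set H) \<and>
      set (j # (j + 1) # sorted_list_of_set H) = {j, j + 1} \<union> H \<and>
      length (j # (j + 1) # sorted_list_of_set H) = card ({j, j + 1} \<union> H)"
    using assms by (simp add: strict_sorted_list_of_set card_insert_if) (auto simp: subset_eq)
qed

lemma leq_p_refl: "leq_p A A"
  unfolding leq_p_def by simp

lemma leq_p_trans: "leq_p A B \<Longrightarrow> leq_p B C \<Longrightarrow> leq_p A C"
  unfolding leq_p_def by (metis le_trans)

lemma leq_p_antisym:
  assumes "finite A" "finite B" "leq_p A B" "leq_p B A"
  shows "A = B"
proof -
  have "sorted_list_of_set A = sorted_list_of_set B"
    using assms(3,4) unfolding leq_p_def by (intro nth_equalityI) (auto intro: order_antisym)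
  then show ?thesis using assms(1,2) by (metis set_sorted_list_of_set)
qed

lemma leq_p_domino_union:
  fixes H :: "nat set"
  assumes "finite H" "finite H'" "H \<subseteq> {j + 2..}" "H' \<subseteq> {j + 2..}" "leq_p H H'"
  shows "leq_p ({j, j + 1} \<union> H) ({j, j + 1} \<union> H')"
proof -
  let ?l = "sorted_list_of_set H" and ?l' = "sorted_list_of_set H'"
  have "length ?l = length ?l'" "\<forall>t < length ?l'. ?l ! t \<le> ?l' ! t"
    using assms(5) unfolding leq_p_def by simp_all
  then have "length (j # (j + 1) # ?l) = length (j # (j + 1) # ?l') \<and>
      (\<forall>t < length (j # (j + 1) # ?l'). (j # (j + 1) # ?l) ! t \<le> (j # (j + 1) # ?l') ! t)"
    by (auto simp: nth_Cons split: nat.split)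
  then show ?thesis
    unfolding leq_p_def
    by (metis assms(1-4) length_sorted_list_of_set sorted_list_of_set_domino_union)
qed

lemma finite_partial_order_has_maximal_above:
  fixes le :: "'a \<Rightarrow> 'a \<Rightarrow> bool"
  assumes "finite P" "x \<in> P"
    and trans: "\<And>a b c. a \<in> P \<Longrightarrow> b \<in> P \<Longrightarrow> c \<in> P \<Longrightarrow> le a b \<Longrightarrow> le b c \<Longrightarrow> le a c"
    and antisym: "\<And>a b. a \<in> P \<Longrightarrow> b \<in> P \<Longrightarrow> le a b \<Longrightarrow> le b a \<Longrightarrow> a = b"
    and refl: "\<And>a. a \<in> P \<Longrightarrow> le a a"
  shows "\<exists>m\<in>P. le x m \<and> (\<forall>y\<in>P. le m y \<longrightarrow> y = m)"
  using \<open>x \<in> P\<close>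
proof (induction x rule: measure_induct_rule[where f = "\<lambda>x. card {y \<in> P. le x y}"])
  case (less x)
  show ?case
  proof (cases "\<forall>y\<in>P. le x y \<longrightarrow> y = x")
    case True
    then show ?thesis using less.prems refl by blast
  next
    case False
    then obtain y where y: "y \<in> P" "le x y" "y \<noteq> x" by blast
    have "{z \<in> P. le y z} \<subset> {z \<in> P. le x z}"
      using y less.prems trans antisym refl by blast
    then have "card {z \<in> P. le y z} < card {z \<in> P. le x z}"
      using \<open>finite P\<close> by (simp add: psubset_card_mono)
    then obtain m where "m \<in> P" "le y m" "\<forall>z\<in>P. le m z \<longrightarrow> z = m"
      using less.IH y(1) by blast
    then show ?thesis using trans[OF less.prems y(1)] y(2) by blast
  qed
qed

lemma leq_p_has_maximal_above:
  assumes "finite P" "\<forall>A\<in>P. finite A" "H \<in> P"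
  shows "\<exists>H'\<in>P. leq_p H H' \<and> (\<forall>H''\<in>P. leq_p H' H'' \<longrightarrow> H'' = H')"
proof (rule finite_partial_order_has_maximal_above[OF assms(1,3)])
  show "A = B" if "A \<in> P" "B \<in> P" "leq_p A B" "leq_p B A" for A B
    using that assms(2) leq_p_antisym by blast
qed (auto intro: leq_p_trans leq_p_refl)

lemma facets_gen_equicard:
  assumes "\<forall>F\<in>\<Phi>. finite F \<and> card F = c"
  shows "facets (gen \<Phi>) = \<Phi>"
proof
  show "facets (gen \<Phi>) \<subseteq> \<Phi>"
    unfolding facets_def gen_def by blast
  show "\<Phi> \<subseteq> facets (gen \<Phi>)"
  proof
    fix F assume F: "F \<in> \<Phi>"
    have "G = F" if "F \<subseteq> G" "G \<subseteq> F'" "F' \<in> \<Phi>" for G F'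
      using that assms F by (metis card_subset_eq subset_antisym subset_trans)
    then show "F \<in> facets (gen \<Phi>)"
      using F unfolding facets_def gen_def by blast
  qed
qed

lemma facets_Bcx: "facets (Bcx n r X m) = ideal_p n r X \<inter> fam r m n"
  unfolding Bcx_def using fam_finite_card[of _ r m n] by (intro facets_gen_equicard[where c = "2 * r"]) blast

lemma cdiff_Bcx:
  "cdiff (Bcx n r S m) (Bcx n r T m) = gen (ideal_p n r S \<inter> fam r m n - ideal_p n r T \<inter> fam r m n)"
  unfolding cdiff_def facets_Bcx ..

lemma join_gen_Pow: "join (gen A) (Pow D) = gen ((\<lambda>H. D \<union> H) ` A)"
proof (intro equalityI subsetI)
  fix x assume "x \<in> join (gen A) (Pow D)"
  then obtain \<sigma> \<tau> F where "x = \<sigma> \<union> \<tau>" "\<tau> \<subseteq> D" "F \<in> A" "\<sigma> \<subseteq> F"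
    unfolding join_def gen_def by auto
  then have "x \<subseteq> D \<union> F" "D \<union> F \<in> (\<lambda>H. D \<union> H) ` A" by auto
  then show "x \<in> gen ((\<lambda>H. D \<union> H) ` A)" unfolding gen_def by blast
next
  fix x assume "x \<in> gen ((\<lambda>H. D \<union> H) ` A)"
  then obtain H where "H \<in> A" "x \<subseteq> D \<union> H" unfolding gen_def by auto
  then have "x - D \<in> gen A" "x \<inter> D \<in> Pow D" "x = (x - D) \<union> (x \<inter> D)"
    unfolding gen_def by auto
  then show "x \<in> join (gen A) (Pow D)" unfolding join_def by blast
qed

lemma gen_UN: "gen (\<Union>j\<in>J. A j) = (\<Union>j\<in>J. gen (A j))"
  unfolding gen_def by blast

lemma domino_union_in_ideal_iff:
  assumes "1 \<le> k" "1 \<le> j" "H \<in> fam (k - 1) (j + 2) n"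
  shows "{j, j + 1} \<union> H \<in> ideal_p n k X \<longleftrightarrow> H \<in> ideal_p n (k - 1) (link_fam n k 1 X j)"
proof -
  define P where "P = {H \<in> fam (k - 1) 1 n. H \<subseteq> {j + 2..n} \<and> {j, j + 1} \<union> H \<in> ideal_p n k X}"
  have "{j..j + 2 * 1 - 1} = {j, j + 1}" by auto
  then have link: "link_fam n k 1 X j = {H \<in> P. \<forall>H'\<in>P. leq_p H H' \<longrightarrow> H' = H}"
    unfolding link_fam_def P_def by simp
  have H: "H \<in> fam (k - 1) 1 n" "H \<subseteq> {j + 2..n}" "finite H"
    using fam_subset[OF assms(3)] fam_antimono[of 1 "j + 2" "k - 1" n] assms(3)
      fam_finite_card(1)[OF assms(3)] by auto
  show ?thesis
  proof
    assume "{j, j + 1} \<union> H \<in> ideal_p n k X"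
    then have "H \<in> P" unfolding P_def using H by auto
    moreover have "finite P" unfolding P_def by (rule finite_subset[OF _ finite_fam]) auto
    moreover have "\<forall>A\<in>P. finite A" unfolding P_def by (blast dest: fam_finite_card(1))
    ultimately have "\<exists>H'\<in>P. leq_p H H' \<and> (\<forall>H''\<in>P. leq_p H' H'' \<longrightarrow> H'' = H')"
      by (intro leq_p_has_maximal_above)
    then obtain H' where "H' \<in> P" "leq_p H H'" "\<forall>H''\<in>P. leq_p H' H'' \<longrightarrow> H'' = H'"
      by blast
    then have "H' \<in> link_fam n k 1 X j" "leq_p H H'" unfolding link by auto
    then show "H \<in> ideal_p n (k - 1) (link_fam n k 1 X j)"
      unfolding ideal_p_def using H by auto
  next
    assume "H \<in> ideal_p n (k - 1) (link_fam n k 1 X j)"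
    then obtain H' where H': "H' \<in> P" "leq_p H H'" unfolding ideal_p_def link by auto
    then obtain F where F: "F \<in> X" "leq_p ({j, j + 1} \<union> H') F" "{j, j + 1} \<union> H' \<in> fam k 1 n"
      unfolding P_def ideal_p_def by auto
    have "H' \<in> fam (k - 1) 1 n" "H' \<subseteq> {j + 2..}" using H'(1) unfolding P_def by auto
    moreover have "H \<subseteq> {j + 2..}" using H(2) by auto
    ultimately have "leq_p ({j, j + 1} \<union> H) ({j, j + 1} \<union> H')"
      using leq_p_domino_union[OF H(3) fam_finite_card(1) _ _ H'(2)] by blast
    then have "leq_p ({j, j + 1} \<union> H) F" using F(2) leq_p_trans by blast
    moreover have "j + 1 \<le> n" using fam_subset[OF F(3)] by auto
    with insert_domino_fam[OF assms(2) _ assms(3)] have "{j, j + 1} \<union> H \<in> fam k 1 n"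
      using assms(1) by simp
    ultimately show "{j, j + 1} \<union> H \<in> ideal_p n k X"
      using F(1) unfolding ideal_p_def by auto
  qed
qed

lemma ideal_fam_diff_first_domino:
  assumes "1 \<le> k" "1 \<le> i"
  shows "ideal_p n k S \<inter> fam k i n - ideal_p n k T \<inter> fam k i n =
    (\<Union>j\<in>{i..}. (\<lambda>H. {j, j + 1} \<union> H) `
       (ideal_p n (k - 1) (link_fam n k 1 S j) \<inter> fam (k - 1) (j + 2) n -
        ideal_p n (k - 1) (link_fam n k 1 T j) \<inter> fam (k - 1) (j + 2) n))"
    (is "?lhs = ?rhs")
proof (intro equalityI subsetI)
  fix F assume F: "F \<in> ?lhs"
  have "0 < k" "F \<in> fam k i n" using F assms(1) by auto
  then obtain j H where jH: "i \<le> j" "j + 1 \<le> n" "H \<in> fam (k - 1) (j + 2) n" "F = {j, j + 1} \<union> H"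
    by (rule fam_split_first_domino)
  then show "F \<in> ?rhs"
    using F domino_union_in_ideal_iff[OF assms(1) _ jH(3)] assms(2) by auto
next
  fix F assume "F \<in> ?rhs"
  then obtain j H where jH: "i \<le> j" "H \<in> fam (k - 1) (j + 2) n" "F = {j, j + 1} \<union> H"
    and link: "H \<in> ideal_p n (k - 1) (link_fam n k 1 S j)" "H \<notin> ideal_p n (k - 1) (link_fam n k 1 T j)"
    by auto
  have "F \<in> ideal_p n k S" "F \<notin> ideal_p n k T"
    using link domino_union_in_ideal_iff[OF assms(1) _ jH(2)] jH(1,3) assms(2) by auto
  moreover have "j + 1 \<le> n" using \<open>F \<in> ideal_p n k S\<close> jH(3) fam_subset
    unfolding ideal_p_def by fastforce
  then have "F \<in> fam k i n" using insert_domino_fam[OF jH(1) _ jH(2)] jH(3) assms(1) by simp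
  ultimately show "F \<in> ?lhs" by auto
qed

theorem corollary3p7:
  fixes k n i :: nat and S T :: "nat set set"
  assumes "1 \<le> k" and "2 * k \<le> n"
    and "antichain_p n k S" and "antichain_p n k T"
    and "prec_fam T S" and "1 \<le> i"
  shows "cdiff (Bcx n k S i) (Bcx n k T i) =
    (\<Union>j\<in>{i..}. join (cdiff (Bcx n (k - 1) (link_fam n k 1 S j) (j + 2))
                             (Bcx n (k - 1) (link_fam n k 1 T j) (j + 2)))
                      (Pow {j, j + 1}))"
  unfolding cdiff_Bcx join_gen_Pow ideal_fam_diff_first_domino[OF assms(1,6)] gen_UN ..

end
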